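(* Let $V_1\subseteq\mathbb{Z}^2$ be infinite and connected with $V_1^c=\mathbb{Z}^2\setminus V_1$ infinite and connected. Let $F=\{\{x,y\}\in\mathcal{E}^2:x\in V_1,y\in V_1^c\}$ be its edge boundary and $F^*$ the set of dual edges of edges in $F$. Then $F^*$ consists of a single doubly infinite dual path which is non-self-intersecting: writing $W^*$ for the set of endpoints of dual edges in $F^*$, the graph $G^*=(W^*,F^* )$ is connected and infinite, and every $v^*\in W^*$ has degree exactly $2$ in $G^*$.
   Context: Connectedness of subsets of $\mathbb{Z}^2$ is with respect to the nearest-neighbour lattice $(\mathbb{Z}^2,\mathcal{E}^2)$. The dual lattice has vertex set $\mathbb{Z}^2+(1/2,1/2)$ and edge set $\mathcal{E}^2+(1/2,1/2)$; the dual edge $e^*$ of $e\in\mathcal{E}^2$ is the unique dual edge bisecting $e$. *)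

theory Defs
  imports Main "HOL.Real"
begin

definition graph_connected :: "'a set \<Rightarrow> 'a set set \<Rightarrow> bool" where
  "graph_connected W F \<longleftrightarrow>
     (\<forall>x\<in>W. \<forall>y\<in>W. \<exists>p. p \<noteq> [] \<and> hd p = x \<and> last p = y \<and> set p \<subseteq> W \<and>
        (\<forall>i. Suc i < length p \<longrightarrow> {p ! i, p ! Suc i} \<in> F))"

definition graph_degree :: "'a set set \<Rightarrow> 'a \<Rightarrow> nat" where
  "graph_degree F v = card {e \<in> F. v \<in> e}"

definition E2 :: "(int \<times> int) set set" where
  "E2 = {{x, y} | x y. \<bar>fst x - fst y\<bar> + \<bar>snd x - snd y\<bar> = 1}"

definition lattice_connected :: "(int \<times> int) set \<Rightarrow> bool" where
  "lattice_connected V = graph_connected V {e \<in> E2. e \<subseteq> V}"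

definition dual_vertices :: "(real \<times> real) set" where
  "dual_vertices = {(of_int a + 1/2, of_int b + 1/2) | a b. True}"

definition E2_dual :: "(real \<times> real) set set" where
  "E2_dual = (\<lambda>e. (\<lambda>(u, v). (u + 1/2, v + 1/2)) ` e) ` ((\<lambda>e. (\<lambda>(a, b). (real_of_int a, real_of_int b)) ` e) ` E2)"

text \<open>The dual edge of the lattice edge {x,y}: the dual edge bisecting it, i.e. the
  segment through the midpoint m = (x+y)/2 in direction perpendicular to y - x,
  with endpoints m \<plusminus> rot90(y - x)/2.\<close>

definition dual_edge_of :: "int \<times> int \<Rightarrow> int \<times> int \<Rightarrow> (real \<times> real) set" where
  "dual_edge_of x y =
     (let mx = (real_of_int (fst x) + real_of_int (fst y)) / 2;
          my = (real_of_int (snd x) + real_of_int (snd y)) / 2;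
          dx = real_of_int (fst y) - real_of_int (fst x);
          dy = real_of_int (snd y) - real_of_int (snd x)
      in {(mx - dy / 2, my + dx / 2), (mx + dy / 2, my - dx / 2)})"

definition dual_edge :: "(int \<times> int) set \<Rightarrow> (real \<times> real) set" where
  "dual_edge e = (THE d. \<exists>x y. e = {x, y} \<and> d = dual_edge_of x y)"

definition edge_boundary :: "(int \<times> int) set \<Rightarrow> (int \<times> int) set set" where
  "edge_boundary V1 = {{x, y} | x y. {x, y} \<in> E2 \<and> x \<in> V1 \<and> y \<notin> V1}"

end

theory Submission
  imports Defs
begin

text \<open>Each unit square of the lattice carries an even number of boundary edges of \<open>V1\<close>, so
  every dual vertex has degree 2 or 4 in \<open>G*\<close>.  Degree 4 means a checkerboard square, with one
  diagonal pair of corners in \<open>V1\<close> and the other in the complement.  A path in \<open>V1\<close> between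
  the first pair, closed up through a third corner, is a closed walk, and counting crossings
  with a vertical ray shows that the two remaining corners are separated by it, so no path in
  the complement joins them.

  For connectivity, the boundary edges whose dual edges are reachable from one dual vertex again
  meet every square in an even number of edges, so they are the coboundary of a 2-colouring of
  the lattice (a discrete Poincare lemma).  The colouring is constant on \<open>V1\<close> and on its
  complement, which are connected, and it differs across one boundary edge; hence it differs
  across all of them and every boundary edge is reachable.  Finally the boundary is infinite,
  since otherwise membership in \<open>V1\<close> would be constant outside a finite box.\<close>

section \<open>Lattice edges and their duals\<close>

definition lattice_adj :: "int \<times> int \<Rightarrow> int \<times> int \<Rightarrow> bool" where
  "lattice_adj u v \<longleftrightarrow> \<bar>fst u - fst v\<bar> + \<bar>snd u - snd v\<bar> = 1"

definition hedge :: "int \<Rightarrow> int \<Rightarrow> (int \<times> int) set" where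
  "hedge i j = {(i, j), (i + 1, j)}"

definition vedge :: "int \<Rightarrow> int \<Rightarrow> (int \<times> int) set" where
  "vedge i j = {(i, j), (i, j + 1)}"

lemma hedge_eq_iff [simp]: "hedge a b = hedge c d \<longleftrightarrow> a = c \<and> b = d"
  unfolding hedge_def by (auto simp: doubleton_eq_iff)

lemma vedge_eq_iff [simp]: "vedge a b = vedge c d \<longleftrightarrow> a = c \<and> b = d"
  unfolding vedge_def by (auto simp: doubleton_eq_iff)

lemma hedge_neq_vedge [simp]: "hedge a b \<noteq> vedge c d" "vedge c d \<noteq> hedge a b"
  unfolding vedge_def hedge_def by (auto simp: doubleton_eq_iff)

lemma lattice_adj_commute: "lattice_adj u v \<longleftrightarrow> lattice_adj v u"
  unfolding lattice_adj_def by arith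

lemma lattice_adj_cases:
  assumes "lattice_adj u v"
  obtains x y where "u = (x, y)" "v = (x + 1, y)"
    | x y where "u = (x + 1, y)" "v = (x, y)"
    | x y where "u = (x, y)" "v = (x, y + 1)"
    | x y where "u = (x, y + 1)" "v = (x, y)"
proof -
  obtain a b c d where u: "u = (a, b)" and v: "v = (c, d)" by (cases u, cases v)
  have "c = a + 1 \<and> d = b \<or> a = c + 1 \<and> d = b \<or> c = a \<and> d = b + 1 \<or> c = a \<and> b = d + 1"
    using assms unfolding lattice_adj_def u v by auto
  then show ?thesis using that u v by auto
qed

lemma lattice_adj_symmetric_cases:
  assumes "lattice_adj u v"
    and "\<And>x y. P (x, y) (x + 1, y)" "\<And>x y. P (x, y) (x, y + 1)" "\<And>u v. P u v \<Longrightarrow> P v u"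
  shows "P u v"
  using assms(1) by (cases rule: lattice_adj_cases) (auto intro: assms(2-4))

lemma lattice_adj_edge_cases:
  assumes "lattice_adj u v"
  obtains x y where "{u, v} = hedge x y" "{fst u, fst v} = {x, x + 1}" "snd u = y" "snd v = y"
    | x y where "{u, v} = vedge x y" "fst u = x" "fst v = x" "{snd u, snd v} = {y, y + 1}"
  using assms
  by (cases rule: lattice_adj_cases)
     (use that in \<open>auto simp: hedge_def vedge_def insert_commute\<close>)

lemma doubleton_in_E2_iff: "{u, v} \<in> E2 \<longleftrightarrow> lattice_adj u v"
proof
  assume "{u, v} \<in> E2"
  then obtain x y where "{u, v} = {x, y}" "lattice_adj x y"
    unfolding E2_def lattice_adj_def by auto
  then show "lattice_adj u v"
    by (auto simp: doubleton_eq_iff lattice_adj_commute)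
qed (unfold E2_def lattice_adj_def, blast)

lemma E2_cases:
  assumes "e \<in> E2"
  obtains i j where "e = hedge i j" | i j where "e = vedge i j"
proof -
  obtain u v where "e = {u, v}" "lattice_adj u v"
    using assms unfolding E2_def lattice_adj_def by auto
  then show ?thesis
    by (elim lattice_adj_edge_cases) (auto intro: that)
qed

definition square_centre :: "int \<times> int \<Rightarrow> real \<times> real" where
  "square_centre s = (real_of_int (fst s) + 1/2, real_of_int (snd s) + 1/2)"

definition square_edges :: "int \<times> int \<Rightarrow> (int \<times> int) set set" where
  "square_edges s = {hedge (fst s) (snd s), vedge (fst s + 1) (snd s),
                     hedge (fst s) (snd s + 1), vedge (fst s) (snd s)}"

lemma square_centre_eq_iff [simp]: "square_centre s = square_centre t \<longleftrightarrow> s = t"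
  unfolding square_centre_def by (auto simp: prod_eq_iff)

lemma hedge_in_square_edges_iff: "hedge i j \<in> square_edges s \<longleftrightarrow> s = (i, j) \<or> s = (i, j - 1)"
  by (cases s) (auto simp: square_edges_def)

lemma vedge_in_square_edges_iff: "vedge i j \<in> square_edges s \<longleftrightarrow> s = (i, j) \<or> s = (i - 1, j)"
  by (cases s) (auto simp: square_edges_def)

lemma E2_square_edgesE:
  assumes "e \<in> E2"
  obtains s where "e \<in> square_edges s"
  using assms
  by (cases rule: E2_cases) (auto simp: hedge_in_square_edges_iff vedge_in_square_edges_iff intro: that)

lemma dual_edge_doubleton: "dual_edge {x, y} = dual_edge_of x y"
  unfolding dual_edge_def
proof (rule the_equality)
  have "dual_edge_of x y = dual_edge_of y x"
    unfolding dual_edge_of_def Let_def by (auto simp: field_simps)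
  then show "\<And>d. \<exists>x' y'. {x, y} = {x', y'} \<and> d = dual_edge_of x' y' \<Longrightarrow> d = dual_edge_of x y"
    by (auto simp: doubleton_eq_iff)
qed blast

lemma dual_edge_hedge: "dual_edge (hedge i j) = {square_centre (i, j), square_centre (i, j - 1)}"
  unfolding hedge_def dual_edge_doubleton dual_edge_of_def square_centre_def Let_def
  by (auto simp: field_simps)

lemma dual_edge_vedge: "dual_edge (vedge i j) = {square_centre (i - 1, j), square_centre (i, j)}"
  unfolding vedge_def dual_edge_doubleton dual_edge_of_def square_centre_def Let_def
  by (auto simp: field_simps)

lemma square_centre_in_dual_edge_iff:
  assumes "e \<in> E2"
  shows "square_centre s \<in> dual_edge e \<longleftrightarrow> e \<in> square_edges s"
  using assms
  by (cases rule: E2_cases)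
     (auto simp: dual_edge_hedge dual_edge_vedge hedge_in_square_edges_iff vedge_in_square_edges_iff)

lemma dual_edge_eq_square_centres:
  assumes "e \<in> E2" "e \<in> square_edges s" "e \<in> square_edges s'" "s \<noteq> s'"
  shows "dual_edge e = {square_centre s, square_centre s'}"
  using assms
  by (cases rule: E2_cases)
     (auto simp: dual_edge_hedge dual_edge_vedge hedge_in_square_edges_iff vedge_in_square_edges_iff)

lemma dual_edge_vertexE:
  assumes "e \<in> E2" "w \<in> dual_edge e"
  obtains s where "w = square_centre s" "e \<in> square_edges s"
  using assms
  by (cases rule: E2_cases)
     (auto simp: dual_edge_hedge dual_edge_vedge hedge_in_square_edges_iff
        vedge_in_square_edges_iff intro: that)

lemma inj_on_dual_edge: "inj_on dual_edge E2"
proof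
  fix e e' assume "e \<in> E2" "e' \<in> E2" "dual_edge e = dual_edge e'"
  then show "e = e'"
    by (elim E2_cases) (auto simp: dual_edge_hedge dual_edge_vedge doubleton_eq_iff)
qed

lemma graph_degree_dual_edges:
  assumes "F \<subseteq> E2"
  shows "graph_degree (dual_edge ` F) (square_centre s) = card (F \<inter> square_edges s)"
proof -
  have "{e \<in> dual_edge ` F. square_centre s \<in> e} = dual_edge ` (F \<inter> square_edges s)"
    using assms square_centre_in_dual_edge_iff by blast
  moreover have "inj_on dual_edge (F \<inter> square_edges s)"
    using inj_on_dual_edge by (rule inj_on_subset) (use assms in blast)
  ultimately show ?thesis
    unfolding graph_degree_def by (simp add: card_image)
qed

lemma card_Int_square_edges:
  "card (X \<inter> square_edges (i, j)) =
     of_bool (hedge i j \<in> X) + of_bool (vedge (i + 1) j \<in> X)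
     + of_bool (hedge i (j + 1) \<in> X) + of_bool (vedge i j \<in> X)"
proof -
  have *: "card (X \<inter> insert e S) = of_bool (e \<in> X) + card (X \<inter> S)" if "finite S" "e \<notin> S" for e S
    using that by (cases "e \<in> X") (auto simp: Int_insert_right)
  show ?thesis
    unfolding square_edges_def by (simp add: * Int_insert_right)
qed

section \<open>Coboundaries\<close>

definition discrete_integral :: "(int \<Rightarrow> int) \<Rightarrow> int \<Rightarrow> int" where
  "discrete_integral c x = (\<Sum>k\<in>{0..<x}. c k) - (\<Sum>k\<in>{x..<0}. c k)"

lemma discrete_integral_0 [simp]: "discrete_integral c 0 = 0"
  by (simp add: discrete_integral_def)

lemma discrete_integral_step: "discrete_integral c (x + 1) = discrete_integral c x + c x"
proof (cases "x \<ge> 0")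
  case True
  then have "{0..<x + 1} = insert x {0..<x}" "{x + 1..<0} = {}" "{x..<0} = {}" by auto
  then show ?thesis by (simp add: discrete_integral_def)
next
  case False
  then have "{0..<x + 1} = {}" "{0..<x} = {}" "{x..<0} = insert x {x + 1..<0}" by auto
  then show ?thesis by (simp add: discrete_integral_def)
qed

lemma even_if_even_increments:
  fixes D :: "int \<Rightarrow> int"
  assumes "even (D 0)" "\<And>y. even (D (y + 1) - D y)"
  shows "even (D y)"
proof (induct y rule: int_induct[where k = 0])
  case base
  show ?case using assms(1) by simp
next
  case (step1 i)
  then show ?case using assms(2)[of i] by (metis dvd_add even_diff diff_add_cancel)
next
  case (step2 i)
  have "even (D i - (D i - D (i - 1)))"
    using step2(2) assms(2)[of "i - 1"] by (intro dvd_diff) simp_all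
  then show ?case by simp
qed

text \<open>Discrete Poincare lemma.  The potential is summed along the x-axis and then vertically;
  the even-square condition makes its horizontal increments come out right as well.\<close>

lemma even_squares_imp_coboundary:
  fixes A :: "(int \<times> int) set set"
  assumes even_squares: "\<And>s. even (card (A \<inter> square_edges s))"
  obtains g :: "int \<times> int \<Rightarrow> bool"
    where "\<And>u v. lattice_adj u v \<Longrightarrow> {u, v} \<in> A \<longleftrightarrow> g u \<noteq> g v"
proof -
  define h where "h x y = discrete_integral (\<lambda>k. of_bool (hedge k 0 \<in> A)) x
                          + discrete_integral (\<lambda>k. of_bool (vedge x k \<in> A)) y" for x y
  define g where "g p = odd (h (fst p) (snd p))" for p
  have h_up: "h x (y + 1) = h x y + of_bool (vedge x y \<in> A)" for x y
    by (simp add: h_def discrete_integral_step)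
  have h_right: "even (h (x + 1) y - h x y - of_bool (hedge x y \<in> A))" for x y
  proof (rule even_if_even_increments[where D = "\<lambda>y. h (x + 1) y - h x y - of_bool (hedge x y \<in> A)"])
    show "even (h (x + 1) 0 - h x 0 - of_bool (hedge x 0 \<in> A))"
      by (simp add: h_def discrete_integral_step)
    fix y
    have "even (int (card (A \<inter> square_edges (x, y))))"
      using even_squares by simp
    then show "even (h (x + 1) (y + 1) - h x (y + 1) - of_bool (hedge x (y + 1) \<in> A)
                     - (h (x + 1) y - h x y - of_bool (hedge x y \<in> A)))"
      unfolding h_up card_Int_square_edges
      by (cases "hedge x y \<in> A"; cases "hedge x (y + 1) \<in> A";
          cases "vedge x y \<in> A"; cases "vedge (x + 1) y \<in> A") simp_all
  qed
  have parity_jump: "P \<longleftrightarrow> odd a \<noteq> odd b" if "even (b - a - of_bool P)" for a b :: int and P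
    using that by (cases P) (simp_all add: even_diff)
  have horizontal: "hedge x y \<in> A \<longleftrightarrow> g (x, y) \<noteq> g (x + 1, y)" for x y
    unfolding g_def fst_conv snd_conv by (rule parity_jump[OF h_right])
  have vertical: "vedge x y \<in> A \<longleftrightarrow> g (x, y) \<noteq> g (x, y + 1)" for x y
    unfolding g_def by (cases "vedge x y \<in> A") (simp_all add: h_up)
  have "{u, v} \<in> A \<longleftrightarrow> g u \<noteq> g v" if "lattice_adj u v" for u v
    using that
  proof (rule lattice_adj_symmetric_cases)
    show "{(x, y), (x + 1, y)} \<in> A \<longleftrightarrow> g (x, y) \<noteq> g (x + 1, y)" for x y
      using horizontal unfolding hedge_def .
    show "{(x, y), (x, y + 1)} \<in> A \<longleftrightarrow> g (x, y) \<noteq> g (x, y + 1)" for x y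
      using vertical unfolding vedge_def .
  qed (auto simp: insert_commute)
  then show ?thesis by (rule that)
qed

section \<open>Crossing parity of closed walks\<close>

lemma successively_iff_nth:
  "successively P xs \<longleftrightarrow> (\<forall>t. Suc t < length xs \<longrightarrow> P (xs ! t) (xs ! Suc t))"
proof (induction xs)
  case (Cons x xs)
  have "(\<forall>t. Suc t < length (x # xs) \<longrightarrow> P ((x # xs) ! t) ((x # xs) ! Suc t)) \<longleftrightarrow>
        (xs = [] \<or> P x (hd xs)) \<and> (\<forall>t. Suc t < length xs \<longrightarrow> P (xs ! t) (xs ! Suc t))"
    by (cases xs) (auto simp: nth_Cons split: nat.splits)
  then show ?case using Cons by (auto simp: successively_Cons)
qed simp

lemma successively_hd_last_eq:
  assumes "successively (\<lambda>x y. f x = f y) xs" "xs \<noteq> []"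
  shows "f (hd xs) = f (last xs)"
  using assms by (induction xs) (auto simp: successively_Cons)

lemma successively_suffix_after_last:
  assumes "successively P xs" "b \<in> set xs" "last xs \<noteq> b"
  shows "\<exists>q ys. P b q \<and> ys \<noteq> [] \<and> hd ys = q \<and> last ys = last xs \<and>
           set ys \<subseteq> set xs - {b} \<and> successively P ys"
  using assms
proof (induction xs)
  case (Cons x xs)
  show ?case
  proof (cases "b \<in> set xs")
    case True
    then have "xs \<noteq> []" by auto
    then show ?thesis
      using Cons True by (auto simp: successively_Cons)
  next
    case False
    then have "xs \<noteq> []" "x = b" using Cons.prems by auto
    then show ?thesis
      using Cons.prems False by (auto simp: successively_Cons)
  qed
qed simp

definition lattice_walk :: "(int \<times> int) list \<Rightarrow> bool" where
  "lattice_walk p \<longleftrightarrow> p \<noteq> [] \<and> successively lattice_adj p"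

definition closed_lattice_walk :: "(int \<times> int) list \<Rightarrow> bool" where
  "closed_lattice_walk p \<longleftrightarrow> lattice_walk p \<and> hd p = last p"

definition traversals :: "(int \<times> int) list \<Rightarrow> (int \<times> int) set \<Rightarrow> nat" where
  "traversals p e = card ({..<length p - 1} \<inter> {t. {p ! t, p ! Suc t} = e})"

text \<open>The horizontal edges \<open>hedge i k\<close> with \<open>k > j\<close> are those met by the upward vertical ray
  from the centre \<open>(i + 1/2, j + 1/2)\<close> of the unit square at \<open>(i, j)\<close>; for a closed walk the
  parity of the number of crossings is that of its winding number around this centre.\<close>

definition crossings_above :: "(int \<times> int) list \<Rightarrow> int \<Rightarrow> int \<Rightarrow> nat" where
  "crossings_above p i j = card ({..<length p - 1} \<inter> {t. \<exists>k>j. {p ! t, p ! Suc t} = hedge i k})"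

definition crossing_parity :: "(int \<times> int) list \<Rightarrow> int \<times> int \<Rightarrow> bool" where
  "crossing_parity p s = odd (crossings_above p (fst s) (snd s))"

lemma crossings_above_eq:
  "crossings_above p i j = crossings_above p i (j + 1) + traversals p (hedge i (j + 1))"
proof -
  define T where "T = {..<length p - 1}"
  define A where "A = {t. \<exists>k>j + 1. {p ! t, p ! Suc t} = hedge i k}"
  define B where "B = {t. {p ! t, p ! Suc t} = hedge i (j + 1)}"
  have "(\<exists>k>j. Q k) \<longleftrightarrow> (\<exists>k>j + 1. Q k) \<or> Q (j + 1)" for Q :: "int \<Rightarrow> bool"
  proof
    assume "\<exists>k>j. Q k"
    then obtain k where "k > j" "Q k" by blast
    then show "(\<exists>k>j + 1. Q k) \<or> Q (j + 1)" by (cases "k = j + 1") (auto intro!: exI[of _ k])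
  qed (auto intro: exI[of _ "j + 1"] dest: less_trans[of j "j + 1", OF less_add_one])
  then have "{t. \<exists>k>j. {p ! t, p ! Suc t} = hedge i k} = A \<union> B"
    unfolding A_def B_def by (simp only: Collect_disj_eq)
  then have "card (T \<inter> {t. \<exists>k>j. {p ! t, p ! Suc t} = hedge i k}) = card (T \<inter> A \<union> T \<inter> B)"
    by (simp add: Int_Un_distrib)
  also have "\<dots> = card (T \<inter> A) + card (T \<inter> B)"
    by (rule card_Un_disjoint) (auto simp: T_def A_def B_def)
  finally show ?thesis
    unfolding crossings_above_def traversals_def T_def A_def B_def .
qed

lemma traversals_eq_0:
  assumes "x \<notin> set p" "x \<in> e"
  shows "traversals p e = 0"
proof -
  have "{p ! t, p ! Suc t} \<noteq> e" if "t < length p - 1" for t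
    using assms that nth_mem[of t p] nth_mem[of "Suc t" p] by auto
  then have "{..<length p - 1} \<inter> {t. {p ! t, p ! Suc t} = e} = {}"
    by blast
  then show ?thesis
    unfolding traversals_def by (simp only: card.empty)
qed

text \<open>The rays up from \<open>(i + 1/2, j + 1/2)\<close> and \<open>(i + 3/2, j + 1/2)\<close> and the segment joining
  their feet bound a half-strip containing the column \<open>{(i + 1, y) | y > j}\<close>.  The counted edges
  are the lattice edges crossing this boundary, and a step crosses it exactly when it enters or
  leaves the column, which a closed walk does an even number of times.\<close>

lemma even_crossing_step:
  assumes "lattice_adj u v"
  shows "even (of_bool (\<exists>k>j. {u, v} = hedge i k) + of_bool (\<exists>k>j. {u, v} = hedge (i + 1) k)
               + of_bool ({u, v} = vedge (i + 1) j)
               + of_bool (fst u = i + 1 \<and> snd u > j) + of_bool (fst v = i + 1 \<and> snd v > j) :: int)"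
  using assms
proof (cases rule: lattice_adj_edge_cases)
  case (1 x y)
  have "(\<exists>k>j. {u, v} = hedge i' k) \<longleftrightarrow> x = i' \<and> j < y" for i'
    using 1(1) by auto
  moreover have "of_bool (fst u = i + 1 \<and> snd u > j) + of_bool (fst v = i + 1 \<and> snd v > j)
                 = (of_bool (x = i \<and> j < y) + of_bool (x = i + 1 \<and> j < y) :: int)"
    using 1(2-4) by (cases "x = i"; cases "x = i + 1") (auto simp: doubleton_eq_iff)
  ultimately show ?thesis
    using 1(1) unfolding add.assoc by simp
next
  case (2 x y)
  have "of_bool (fst u = i + 1 \<and> snd u > j) + of_bool (fst v = i + 1 \<and> snd v > j)
        = (of_bool (x = i + 1 \<and> y = j) + 2 * of_bool (x = i + 1 \<and> j < y) :: int)"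
    using 2(2-4) by (cases "x = i + 1"; cases "j < y"; cases "y = j") (auto simp: doubleton_eq_iff)
  then show ?thesis
    using 2(1) unfolding add.assoc by simp
qed

lemma even_crossings_adjacent_columns:
  assumes "closed_lattice_walk p"
  shows "even (int (crossings_above p i j) + int (crossings_above p (i + 1) j)
               + int (traversals p (vedge (i + 1) j)))"
proof -
  define m where "m = length p - 1"
  define in_column where "in_column w = (of_bool (fst w = i + 1 \<and> snd w > j) :: int)" for w
  define a where "a t = (of_bool (\<exists>k>j. {p ! t, p ! Suc t} = hedge i k) :: int)" for t
  define b where "b t = (of_bool (\<exists>k>j. {p ! t, p ! Suc t} = hedge (i + 1) k) :: int)" for t
  define c where "c t = (of_bool ({p ! t, p ! Suc t} = vedge (i + 1) j) :: int)" for t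
  have "even (\<Sum>t<m. a t + b t + c t + in_column (p ! t) + in_column (p ! Suc t))"
  proof (rule dvd_sum)
    fix t assume "t \<in> {..<m}"
    then have "lattice_adj (p ! t) (p ! Suc t)"
      using assms unfolding closed_lattice_walk_def lattice_walk_def successively_iff_nth m_def
      by auto
    then show "even (a t + b t + c t + in_column (p ! t) + in_column (p ! Suc t))"
      unfolding a_def b_def c_def in_column_def by (rule even_crossing_step)
  qed
  moreover have "(\<Sum>t<m. in_column (p ! Suc t)) = (\<Sum>t<m. in_column (p ! t))"
  proof -
    have "p ! 0 = p ! m"
      using assms unfolding closed_lattice_walk_def lattice_walk_def m_def
      by (metis hd_conv_nth last_conv_nth)
    have "in_column (p ! 0) + (\<Sum>t<m. in_column (p ! Suc t)) = (\<Sum>t<Suc m. in_column (p ! t))"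
      by (rule sum.lessThan_Suc_shift[symmetric])
    also have "\<dots> = (\<Sum>t<m. in_column (p ! t)) + in_column (p ! m)"
      by simp
    finally show ?thesis using \<open>p ! 0 = p ! m\<close> by simp
  qed
  moreover have sums: "int (crossings_above p i j) = (\<Sum>t<m. a t)"
    "int (crossings_above p (i + 1) j) = (\<Sum>t<m. b t)"
    "int (traversals p (vedge (i + 1) j)) = (\<Sum>t<m. c t)"
    unfolding crossings_above_def traversals_def a_def b_def c_def m_def by simp_all
  ultimately have "even ((\<Sum>t<m. a t) + (\<Sum>t<m. b t) + (\<Sum>t<m. c t) + 2 * (\<Sum>t<m. in_column (p ! t)))"
    by (simp add: sum.distrib algebra_simps)
  then show ?thesis
    using sums by simp
qed

lemma crossing_parity_adj:
  assumes "closed_lattice_walk p" "lattice_adj u v" "u \<notin> set p" "v \<notin> set p"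
  shows "crossing_parity p u = crossing_parity p v"
proof -
  have "u \<notin> set p \<longrightarrow> v \<notin> set p \<longrightarrow> crossing_parity p u = crossing_parity p v"
    using assms(2)
  proof (rule lattice_adj_symmetric_cases)
    fix x y
    show "(x, y) \<notin> set p \<longrightarrow> (x + 1, y) \<notin> set p \<longrightarrow>
          crossing_parity p (x, y) = crossing_parity p (x + 1, y)"
    proof (intro impI)
      assume "(x + 1, y) \<notin> set p"
      then have "traversals p (vedge (x + 1) y) = 0"
        by (intro traversals_eq_0[of "(x + 1, y)"]) (auto simp: vedge_def)
      then show "crossing_parity p (x, y) = crossing_parity p (x + 1, y)"
        using even_crossings_adjacent_columns[OF assms(1), of x y] by (simp add: crossing_parity_def)
    qed
    show "(x, y) \<notin> set p \<longrightarrow> (x, y + 1) \<notin> set p \<longrightarrow>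
          crossing_parity p (x, y) = crossing_parity p (x, y + 1)"
    proof (intro impI)
      assume "(x, y + 1) \<notin> set p"
      then have "traversals p (hedge x (y + 1)) = 0"
        by (intro traversals_eq_0[of "(x, y + 1)"]) (auto simp: hedge_def)
      then show "crossing_parity p (x, y) = crossing_parity p (x, y + 1)"
        using crossings_above_eq[of p x y] by (simp add: crossing_parity_def)
    qed
  qed auto
  then show ?thesis
    using assms(3,4) by blast
qed

lemma crossing_parity_walk:
  assumes "closed_lattice_walk p" "lattice_walk q" "set q \<inter> set p = {}"
  shows "crossing_parity p (hd q) = crossing_parity p (last q)"
proof (rule successively_hd_last_eq)
  show "successively (\<lambda>u v. crossing_parity p u = crossing_parity p v) q"
    using assms(2) unfolding lattice_walk_def
    by (elim conjE successively_mono) (use assms(1,3) crossing_parity_adj in blast)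
qed (use assms(2) lattice_walk_def in blast)

lemma lattice_connected_walk:
  assumes "lattice_connected S" "x \<in> S" "y \<in> S"
  obtains p where "lattice_walk p" "hd p = x" "last p = y" "set p \<subseteq> S"
proof -
  obtain p where p: "p \<noteq> []" "hd p = x" "last p = y" "set p \<subseteq> S"
    "\<forall>i. Suc i < length p \<longrightarrow> {p ! i, p ! Suc i} \<in> {e \<in> E2. e \<subseteq> S}"
    using assms unfolding lattice_connected_def graph_connected_def by blast
  then have "successively lattice_adj p"
    by (auto simp: successively_iff_nth simp flip: doubleton_in_E2_iff)
  with p show ?thesis
    by (intro that) (simp_all add: lattice_walk_def)
qed

lemma step_through_single_visit:
  assumes "x \<notin> set p" "x \<notin> set q" "t < length (p @ x # q) - 1"
    and "x \<in> {(p @ x # q) ! t, (p @ x # q) ! Suc t}"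
  shows "Suc t = length p \<or> t = length p"
proof -
  have at_x: "i = length p" if "i < length (p @ x # q)" "(p @ x # q) ! i = x" for i
  proof (rule ccontr)
    assume "i \<noteq> length p"
    then have "(p @ x # q) ! i \<in> set p \<or> (p @ x # q) ! i \<in> set q"
      using that(1) by (auto simp: nth_append nth_Cons' split: if_splits)
    then show False using that(2) assms(1,2) by auto
  qed
  from assms(4) have "x = (p @ x # q) ! t \<or> x = (p @ x # q) ! Suc t"
    by simp
  then show ?thesis
  proof
    assume "x = (p @ x # q) ! t"
    then have "t = length p" using assms(3) by (intro at_x) simp_all
    then show ?thesis ..
  next
    assume "x = (p @ x # q) ! Suc t"
    then have "Suc t = length p" using assms(3) by (intro at_x) simp_all
    then show ?thesis ..
  qed
qed

lemma traversals_single_visit: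
  assumes "p \<noteq> []" "q \<noteq> []" "x \<notin> set p" "x \<notin> set q" "last p \<noteq> hd q"
  shows "traversals (p @ x # q) {last p, x} = 1" "traversals (p @ x # q) {x, hd q} = 1"
proof -
  define W where "W = p @ x # q"
  define n where "n = length p"
  have n: "0 < n" "n < length W - 1"
    using assms(1,2) by (auto simp: W_def n_def)
  have W_at: "W ! (n - 1) = last p" "W ! n = x" "W ! Suc n = hd q"
    using assms(1,2) by (auto simp: W_def n_def nth_append last_conv_nth hd_conv_nth)
  have steps: "Suc t = n \<or> t = n" if "t < length W - 1" "x \<in> {W ! t, W ! Suc t}" for t
    using step_through_single_visit[OF assms(3,4)] that unfolding W_def n_def by blast
  have "last p \<noteq> x" "hd q \<noteq> x"
    using assms by auto
  have "{..<length W - 1} \<inter> {t. {W ! t, W ! Suc t} = {last p, x}} = {n - 1}"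
  proof (intro set_eqI iffI)
    fix t assume "t \<in> {..<length W - 1} \<inter> {t. {W ! t, W ! Suc t} = {last p, x}}"
    then have t: "t < length W - 1" "{W ! t, W ! Suc t} = {last p, x}" by auto
    then have "Suc t = n \<or> t = n" by (intro steps) auto
    moreover have "t \<noteq> n"
      using t(2) W_at \<open>hd q \<noteq> x\<close> assms(5) by (auto simp: doubleton_eq_iff)
    ultimately show "t \<in> {n - 1}" by auto
  qed (use n W_at in auto)
  moreover have "{..<length W - 1} \<inter> {t. {W ! t, W ! Suc t} = {x, hd q}} = {n}"
  proof (intro set_eqI iffI)
    fix t assume "t \<in> {..<length W - 1} \<inter> {t. {W ! t, W ! Suc t} = {x, hd q}}"
    then have t: "t < length W - 1" "{W ! t, W ! Suc t} = {x, hd q}" by auto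
    then have "Suc t = n \<or> t = n" by (intro steps) auto
    moreover have "Suc t \<noteq> n"
      using t(2) W_at \<open>last p \<noteq> x\<close> assms(5) by (auto simp: doubleton_eq_iff)
    ultimately show "t \<in> {n}" by simp
  qed (use n W_at in auto)
  ultimately show "traversals (p @ x # q) {last p, x} = 1" "traversals (p @ x # q) {x, hd q} = 1"
    unfolding traversals_def W_def by simp_all
qed

lemma crossing_parity_across_vedge:
  assumes "closed_lattice_walk p" "odd (traversals p (vedge (i + 1) j))" "(i + 2, j) \<notin> set p"
  shows "crossing_parity p (i + 2, j) \<noteq> crossing_parity p (i, j)"
proof -
  have "traversals p (vedge (i + 2) j) = 0"
    using assms(3) by (intro traversals_eq_0[of "(i + 2, j)"]) (auto simp: vedge_def)
  then have "even (int (crossings_above p (i + 1) j) + int (crossings_above p (i + 2) j))"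
    using even_crossings_adjacent_columns[OF assms(1), of "i + 1" j] by (simp add: add.assoc)
  moreover have "even (int (crossings_above p i j) + int (crossings_above p (i + 1) j)
                       + int (traversals p (vedge (i + 1) j)))"
    by (rule even_crossings_adjacent_columns[OF assms(1)])
  ultimately show ?thesis
    using assms(2) unfolding crossing_parity_def by simp
qed

lemma crossing_parity_across_hedge:
  assumes "closed_lattice_walk p" "odd (traversals p (hedge i j))" "(i + 1, j - 1) \<notin> set p"
  shows "crossing_parity p (i + 1, j - 1) \<noteq> crossing_parity p (i, j)"
proof -
  have "traversals p (vedge (i + 1) (j - 1)) = 0"
    using assms(3) by (intro traversals_eq_0[of "(i + 1, j - 1)"]) (auto simp: vedge_def)
  then have "even (int (crossings_above p i (j - 1)) + int (crossings_above p (i + 1) (j - 1)))"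
    using even_crossings_adjacent_columns[OF assms(1), of i "j - 1"] by simp
  moreover have "crossings_above p i (j - 1) = crossings_above p i j + traversals p (hedge i j)"
    using crossings_above_eq[of p i "j - 1"] by simp
  ultimately show ?thesis
    using assms(2) unfolding crossing_parity_def by simp
qed

lemma closed_lattice_walk_through_corner:
  assumes "lattice_walk p" "hd p = c" "last p = a" "b \<notin> set p" "a \<noteq> c"
    and "lattice_adj a b" "lattice_adj b c"
  shows "closed_lattice_walk (p @ [b, c])"
    and "traversals (p @ [b, c]) {a, b} = 1" "traversals (p @ [b, c]) {b, c} = 1"
proof -
  show "closed_lattice_walk (p @ [b, c])"
    using assms(1-3,6,7)
    by (auto simp: closed_lattice_walk_def lattice_walk_def successively_append_iff)
  have "b \<noteq> c"
    using assms(7) by (auto simp: lattice_adj_def)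
  then show "traversals (p @ [b, c]) {a, b} = 1" "traversals (p @ [b, c]) {b, c} = 1"
    using traversals_single_visit[of p "[c]" b] assms(1,3-5) by (auto simp: lattice_walk_def)
qed

text \<open>Let \<open>a, b, c, d\<close> be the corners \<open>(i, j), (i + 1, j), (i + 1, j + 1), (i, j + 1)\<close>.
  Close a path in \<open>S\<close> from \<open>c\<close> to \<open>a\<close> through \<open>b\<close> into a closed walk \<open>W\<close>.  A path in \<open>-S\<close>
  from \<open>b\<close> to \<open>d\<close> avoids \<open>W\<close> after its last visit to \<open>b\<close>, so the crossing parity of \<open>W\<close> is
  the same at its next vertex \<open>q\<close> as at \<open>d\<close>, hence as at \<open>a\<close>; but \<open>W\<close> passes once through
  \<open>b\<close>, which flips the parity between \<open>a\<close> and each possible \<open>q\<close>.\<close>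

lemma no_checkerboard_square:
  assumes "lattice_connected S" "lattice_connected (- S)"
    and "(i, j) \<in> S" "(i + 1, j + 1) \<in> S" "(i + 1, j) \<notin> S" "(i, j + 1) \<notin> S"
  shows False
proof -
  define a b c d where "a = (i, j)" and "b = (i + 1, j)" and "c = (i + 1, j + 1)" and "d = (i, j + 1)"
  obtain P where P: "lattice_walk P" "hd P = c" "last P = a" "set P \<subseteq> S"
    using lattice_connected_walk[OF assms(1), of c a] assms(3,4) unfolding a_def c_def by blast
  obtain Q where Q: "lattice_walk Q" "hd Q = b" "last Q = d" "set Q \<subseteq> - S"
    using lattice_connected_walk[OF assms(2), of b d] assms(5,6) unfolding b_def d_def by blast
  define W where "W = P @ [b, c]"
  have "b \<notin> set P" "a \<noteq> c" "lattice_adj a b" "lattice_adj b c"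
    using P(4) assms(5) by (auto simp: lattice_adj_def a_def b_def c_def)
  note W = closed_lattice_walk_through_corner[OF P(1-3) this, folded W_def]
  have "b \<in> set Q" "last Q \<noteq> b"
    using Q(1-3) hd_in_set[of Q] by (auto simp: lattice_walk_def b_def d_def)
  then obtain q R where R: "lattice_adj b q" "R \<noteq> []" "hd R = q" "last R = d"
      "set R \<subseteq> set Q - {b}" "successively lattice_adj R"
    using successively_suffix_after_last[of lattice_adj Q b] Q(1,3) unfolding lattice_walk_def by blast
  have off_W: "x \<notin> set W" if "x \<notin> S" "x \<noteq> b" for x
    using that P(4) assms(4) by (auto simp: W_def c_def)
  have "set R \<inter> set W = {}"
    using R(5) Q(4) off_W by blast
  then have "crossing_parity W q = crossing_parity W d"
    using crossing_parity_walk[OF W(1), of R] R(2-4,6) by (simp add: lattice_walk_def)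
  also have "\<dots> = crossing_parity W a"
  proof -
    have "traversals W (hedge i (j + 1)) = 0"
      using off_W[of d] assms(6) by (intro traversals_eq_0[of d]) (auto simp: d_def b_def hedge_def)
    then show ?thesis
      using crossings_above_eq[of W i j] by (simp add: crossing_parity_def a_def d_def)
  qed
  finally have parity_q: "crossing_parity W q = crossing_parity W a" .
  have "q \<in> set R"
    using R(2,3) hd_in_set by blast
  then have "q \<notin> S" "q \<notin> set W"
    using R(5) Q(4) off_W by blast+
  moreover have "q = (i + 2, j) \<or> q = (i, j) \<or> q = (i + 1, j + 1) \<or> q = (i + 1, j - 1)"
    using R(1) unfolding b_def by (cases rule: lattice_adj_cases) auto
  ultimately have "q = (i + 2, j) \<or> q = (i + 1, j - 1)"
    using assms(3,4) by auto
  moreover have "odd (traversals W (vedge (i + 1) j))" "odd (traversals W (hedge i j))"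
    using W(2,3) by (simp_all add: vedge_def hedge_def a_def b_def c_def)
  ultimately show False
    using parity_q \<open>q \<notin> set W\<close> crossing_parity_across_vedge[OF W(1)]
      crossing_parity_across_hedge[OF W(1)]
    unfolding a_def by blast
qed

section \<open>Edge boundaries\<close>

lemma edge_boundary_doubleton_iff:
  "{u, v} \<in> edge_boundary V \<longleftrightarrow> lattice_adj u v \<and> (u \<in> V) \<noteq> (v \<in> V)"
proof
  assume "{u, v} \<in> edge_boundary V"
  then obtain x y where "{u, v} = {x, y}" "lattice_adj x y" "x \<in> V" "y \<notin> V"
    unfolding edge_boundary_def doubleton_in_E2_iff by blast
  then show "lattice_adj u v \<and> (u \<in> V) \<noteq> (v \<in> V)"
    by (auto simp: doubleton_eq_iff lattice_adj_commute)
next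
  assume uv: "lattice_adj u v \<and> (u \<in> V) \<noteq> (v \<in> V)"
  show "{u, v} \<in> edge_boundary V"
  proof (cases "u \<in> V")
    case True
    then show ?thesis
      using uv unfolding edge_boundary_def doubleton_in_E2_iff by blast
  next
    case False
    then have "{v, u} \<in> edge_boundary V"
      using uv lattice_adj_commute unfolding edge_boundary_def doubleton_in_E2_iff by blast
    then show ?thesis by (simp add: insert_commute)
  qed
qed

lemma edge_boundaryE:
  assumes "e \<in> edge_boundary V"
  obtains x y where "e = {x, y}" "lattice_adj x y" "x \<in> V" "y \<notin> V"
  using assms unfolding edge_boundary_def doubleton_in_E2_iff by blast

lemma edge_boundary_subset_E2: "edge_boundary V \<subseteq> E2"
  unfolding edge_boundary_def by auto

lemma card_edge_boundary_square:
  "card (edge_boundary V \<inter> square_edges (i, j)) =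
     of_bool (((i, j) \<in> V) \<noteq> ((i + 1, j) \<in> V)) + of_bool (((i + 1, j) \<in> V) \<noteq> ((i + 1, j + 1) \<in> V))
     + of_bool (((i, j + 1) \<in> V) \<noteq> ((i + 1, j + 1) \<in> V)) + of_bool (((i, j) \<in> V) \<noteq> ((i, j + 1) \<in> V))"
  by (simp add: card_Int_square_edges hedge_def vedge_def edge_boundary_doubleton_iff lattice_adj_def)

lemma even_card_edge_boundary_square: "even (card (edge_boundary V \<inter> square_edges s))"
proof (cases s)
  case (Pair i j)
  show ?thesis
    unfolding Pair card_edge_boundary_square
    by (cases "(i, j) \<in> V"; cases "(i + 1, j) \<in> V"; cases "(i + 1, j + 1) \<in> V";
        cases "(i, j + 1) \<in> V") simp_all
qed

lemma card_edge_boundary_square_eq_2: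
  assumes "lattice_connected V" "lattice_connected (- V)"
    and "edge_boundary V \<inter> square_edges s \<noteq> {}"
  shows "card (edge_boundary V \<inter> square_edges s) = 2"
proof (cases s)
  case (Pair i j)
  have "card (edge_boundary V \<inter> square_edges s) \<noteq> 0"
    using assms(3) by (simp add: square_edges_def)
  moreover have "\<not> ((i, j) \<in> V \<and> (i + 1, j + 1) \<in> V \<and> (i + 1, j) \<notin> V \<and> (i, j + 1) \<notin> V)"
    using no_checkerboard_square[OF assms(1,2)] by blast
  moreover have "\<not> ((i, j) \<notin> V \<and> (i + 1, j + 1) \<notin> V \<and> (i + 1, j) \<in> V \<and> (i, j + 1) \<in> V)"
    using no_checkerboard_square[OF assms(2), of i j] assms(1) by auto
  ultimately show ?thesis
    unfolding Pair card_edge_boundary_square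
    by (cases "(i, j) \<in> V"; cases "(i + 1, j) \<in> V"; cases "(i + 1, j + 1) \<in> V";
        cases "(i, j + 1) \<in> V") simp_all
qed

lemma int_step_invariant:
  fixes P :: "int \<Rightarrow> bool"
  assumes "\<And>k. min m n \<le> k \<Longrightarrow> k < max m n \<Longrightarrow> P k \<longleftrightarrow> P (k + 1)"
  shows "P m \<longleftrightarrow> P n"
proof -
  have upward: "P a \<longleftrightarrow> P b"
    if "a \<le> b" "\<And>k. a \<le> k \<Longrightarrow> k < b \<Longrightarrow> P k \<longleftrightarrow> P (k + 1)" for a b
    using that by (induction b rule: int_ge_induct) auto
  show ?thesis
  proof (cases "m \<le> n")
    case True
    then show ?thesis using upward[of m n] assms by (simp add: min_def max_def)
  next
    case False
    then show ?thesis using upward[of n m] assms by (simp add: min_def max_def)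
  qed
qed

lemma finite_edge_boundary_bounded:
  assumes "finite (edge_boundary V)"
  obtains R :: int where "R \<ge> 0" "\<And>p. p \<in> \<Union>(edge_boundary V) \<Longrightarrow> \<bar>fst p\<bar> \<le> R \<and> \<bar>snd p\<bar> \<le> R"
proof -
  have "finite e" if "e \<in> edge_boundary V" for e
  proof -
    have "e \<in> E2" using that edge_boundary_subset_E2 by blast
    then show ?thesis by (cases rule: E2_cases) (simp_all add: hedge_def vedge_def)
  qed
  with assms have fin: "finite (\<Union>(edge_boundary V))" by blast
  define R where "R = Max (insert 0 ((\<lambda>p. max \<bar>fst p\<bar> \<bar>snd p\<bar>) ` \<Union>(edge_boundary V)))"
  have "max \<bar>fst p\<bar> \<bar>snd p\<bar> \<le> R" if "p \<in> \<Union>(edge_boundary V)" for p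
    unfolding R_def using fin that by (intro Max_ge) auto
  moreover have "R \<ge> 0" using fin by (simp add: R_def)
  ultimately show ?thesis
    using that by simp
qed

text \<open>Outside a box containing the boundary, membership in \<open>V\<close> is constant along every row
  and column that misses the box, and all these rows and columns meet.\<close>

lemma mem_outside_boundary_box:
  assumes "R \<ge> 0" "\<And>p. p \<in> \<Union>(edge_boundary V) \<Longrightarrow> \<bar>fst p\<bar> \<le> R \<and> \<bar>snd p\<bar> \<le> R"
    and "R < \<bar>fst p\<bar> \<or> R < \<bar>snd p\<bar>"
  shows "p \<in> V \<longleftrightarrow> (R + 1, R + 1) \<in> V"
proof -
  have step: "u \<in> V \<longleftrightarrow> v \<in> V" if "lattice_adj u v" "R < \<bar>fst u\<bar> \<or> R < \<bar>snd u\<bar>" for u v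
  proof (rule ccontr)
    assume "(u \<in> V) \<noteq> (v \<in> V)"
    then have "u \<in> \<Union>(edge_boundary V)"
      using that(1) edge_boundary_doubleton_iff[of u v V] by blast
    then show False
      using assms(2)[of u] that(2) by auto
  qed
  have column: "(x, m) \<in> V \<longleftrightarrow> (x, n) \<in> V" if "R < \<bar>x\<bar>" for x m n
    by (rule int_step_invariant) (use that in \<open>auto intro!: step simp: lattice_adj_def\<close>)
  have row: "(m, y) \<in> V \<longleftrightarrow> (n, y) \<in> V" if "R < \<bar>y\<bar>" for y m n
    by (rule int_step_invariant) (use that in \<open>auto intro!: step simp: lattice_adj_def\<close>)
  have "R < \<bar>R + 1\<bar>" using assms(1) by simp
  then show ?thesis
    using assms(3) column row by (cases p) (metis (no_types, lifting) fst_conv snd_conv)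
qed

lemma infinite_edge_boundary:
  assumes "infinite V" "infinite (- V)"
  shows "infinite (edge_boundary V)"
proof
  assume "finite (edge_boundary V)"
  then obtain R :: int where R: "R \<ge> 0" "\<And>p. p \<in> \<Union>(edge_boundary V) \<Longrightarrow> \<bar>fst p\<bar> \<le> R \<and> \<bar>snd p\<bar> \<le> R"
    by (rule finite_edge_boundary_bounded) blast
  have "finite {p :: int \<times> int. \<not> (R < \<bar>fst p\<bar> \<or> R < \<bar>snd p\<bar>)}"
    by (rule finite_subset[of _ "{-R..R} \<times> {-R..R}"]) auto
  then have "\<not> V \<subseteq> {p. \<not> (R < \<bar>fst p\<bar> \<or> R < \<bar>snd p\<bar>)}" "\<not> - V \<subseteq> {p. \<not> (R < \<bar>fst p\<bar> \<or> R < \<bar>snd p\<bar>)}"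
    using assms finite_subset by blast+
  then obtain p q where "p \<in> V" "R < \<bar>fst p\<bar> \<or> R < \<bar>snd p\<bar>" "q \<notin> V" "R < \<bar>fst q\<bar> \<or> R < \<bar>snd q\<bar>"
    by blast
  then show False
    using mem_outside_boundary_box[OF R] by blast
qed

section \<open>The dual boundary graph\<close>

lemma graph_connected_if_rtranclp:
  assumes "\<And>x y. x \<in> \<Union>F \<Longrightarrow> y \<in> \<Union>F \<Longrightarrow> (\<lambda>x y. {x, y} \<in> F)\<^sup>*\<^sup>* x y"
  shows "graph_connected (\<Union>F) F"
proof -
  have "\<exists>p. p \<noteq> [] \<and> hd p = x \<and> last p = y \<and> set p \<subseteq> \<Union>F \<and> successively (\<lambda>x y. {x, y} \<in> F) p"
    if "(\<lambda>x y. {x, y} \<in> F)\<^sup>*\<^sup>* x y" "x \<in> \<Union>F" for x y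
    using that
  proof (induction rule: converse_rtranclp_induct)
    case base
    then show ?case by (intro exI[of _ "[y]"]) auto
  next
    case (step x z)
    then obtain p where "p \<noteq> []" "hd p = z" "last p = y" "set p \<subseteq> \<Union>F"
        "successively (\<lambda>x y. {x, y} \<in> F) p"
      by blast
    with step.hyps(1) show ?case
      by (intro exI[of _ "x # p"]) (auto simp: successively_Cons)
  qed
  then show ?thesis
    using assms unfolding graph_connected_def successively_iff_nth by blast
qed

lemma coboundary_constant_on_walk:
  assumes "\<And>u v. lattice_adj u v \<Longrightarrow> {u, v} \<in> A \<longleftrightarrow> g u \<noteq> g v" "A \<subseteq> edge_boundary V"
    and "lattice_walk p" "set p \<subseteq> V \<or> set p \<subseteq> - V"
  shows "g (hd p) = g (last p)"
proof (rule successively_hd_last_eq)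
  have "g x = g y" if "x \<in> set p" "y \<in> set p" "lattice_adj x y" for x y
  proof -
    have "{x, y} \<notin> edge_boundary V"
      using that(1,2) assms(4) edge_boundary_doubleton_iff by auto
    then show ?thesis
      using assms(1)[OF that(3)] assms(2) by blast
  qed
  then show "successively (\<lambda>x y. g x = g y) p"
    using assms(3) unfolding lattice_walk_def by (elim conjE successively_mono) blast
qed (use assms(3) lattice_walk_def in blast)

lemma even_squares_subset_edge_boundary_eq:
  assumes "lattice_connected V" "lattice_connected (- V)"
    and "A \<subseteq> edge_boundary V" "A \<noteq> {}" "\<And>s. even (card (A \<inter> square_edges s))"
  shows "A = edge_boundary V"
proof (rule ccontr)
  assume "A \<noteq> edge_boundary V"
  then obtain f where f: "f \<in> edge_boundary V" "f \<notin> A"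
    using assms(3) by blast
  obtain e where e: "e \<in> A"
    using assms(4) by blast
  obtain g :: "int \<times> int \<Rightarrow> bool"
    where g: "\<And>u v. lattice_adj u v \<Longrightarrow> {u, v} \<in> A \<longleftrightarrow> g u \<noteq> g v"
    using even_squares_imp_coboundary[OF assms(5)] by blast
  note g_walk = coboundary_constant_on_walk[OF g assms(3)]
  obtain x y where xy: "e = {x, y}" "lattice_adj x y" "x \<in> V" "y \<notin> V"
    using e assms(3) by (blast elim: edge_boundaryE)
  obtain x' y' where xy': "f = {x', y'}" "lattice_adj x' y'" "x' \<in> V" "y' \<notin> V"
    using f(1) by (rule edge_boundaryE)
  obtain P where "lattice_walk P" "hd P = x" "last P = x'" "set P \<subseteq> V"
    using lattice_connected_walk[OF assms(1) xy(3) xy'(3)] .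
  then have "g x = g x'"
    using g_walk by blast
  moreover obtain Q where "lattice_walk Q" "hd Q = y" "last Q = y'" "set Q \<subseteq> - V"
    using lattice_connected_walk[OF assms(2)] xy(4) xy'(4) by blast
  then have "g y = g y'"
    using g_walk by blast
  moreover have "g x \<noteq> g y" "g x' = g y'"
    using g[OF xy(2)] g[OF xy'(2)] e f(2) xy(1) xy'(1) by auto
  ultimately show False
    by simp
qed

lemma dual_edge_boundary_vertexE:
  assumes "w \<in> \<Union>(dual_edge ` edge_boundary V)"
  obtains s f where "w = square_centre s" "f \<in> edge_boundary V \<inter> square_edges s"
proof -
  obtain f where f: "f \<in> edge_boundary V" "w \<in> dual_edge f"
    using assms by blast
  moreover have "f \<in> E2"
    using f(1) edge_boundary_subset_E2 by blast
  ultimately show ?thesis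
    using that by (blast elim: dual_edge_vertexE)
qed

lemma graph_degree_dual_edge_boundary:
  assumes "lattice_connected V" "lattice_connected (- V)" "w \<in> \<Union>(dual_edge ` edge_boundary V)"
  shows "graph_degree (dual_edge ` edge_boundary V) w = 2"
proof -
  obtain s f where "w = square_centre s" "f \<in> edge_boundary V \<inter> square_edges s"
    using assms(3) by (rule dual_edge_boundary_vertexE)
  then show ?thesis
    using graph_degree_dual_edges[OF edge_boundary_subset_E2]
      card_edge_boundary_square_eq_2[OF assms(1,2), of s] by auto
qed

lemma dual_edges_link_square_centres:
  assumes "F \<subseteq> E2" "f \<in> F" "f \<in> square_edges s" "f \<in> square_edges s'"
  shows "(\<lambda>x y. {x, y} \<in> dual_edge ` F)\<^sup>*\<^sup>* (square_centre s) (square_centre s')"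
proof (cases "s = s'")
  case False
  then have "dual_edge f = {square_centre s, square_centre s'}"
    using assms by (intro dual_edge_eq_square_centres) auto
  then show ?thesis
    using assms(2) by (metis image_eqI r_into_rtranclp)
qed simp

text \<open>The boundary edges reachable in the dual graph from one square meet every square in none
  or all of its boundary edges, hence in an even number; so they form the whole boundary.\<close>

lemma dual_edge_boundary_reachable:
  assumes "lattice_connected V" "lattice_connected (- V)"
    and "e0 \<in> edge_boundary V \<inter> square_edges s0" "f \<in> edge_boundary V \<inter> square_edges s"
  shows "(\<lambda>x y. {x, y} \<in> dual_edge ` edge_boundary V)\<^sup>*\<^sup>* (square_centre s0) (square_centre s)"
proof -
  define F where "F = edge_boundary V"
  define R where "R = (\<lambda>x y. {x, y} \<in> dual_edge ` F)\<^sup>*\<^sup>*"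
  have link: "R (square_centre s) (square_centre s')"
    if "f \<in> F" "f \<in> square_edges s" "f \<in> square_edges s'" for f s s'
    using dual_edges_link_square_centres[OF _ that] edge_boundary_subset_E2 unfolding F_def R_def by blast
  have R_trans: "R x z" if "R x y" "R y z" for x y z
    using that unfolding R_def by (rule rtranclp_trans)
  define A where "A = {f \<in> F. \<exists>s. f \<in> square_edges s \<and> R (square_centre s0) (square_centre s)}"
  have "A \<inter> square_edges s = (if R (square_centre s0) (square_centre s) then F \<inter> square_edges s else {})"
    for s
  proof (cases "R (square_centre s0) (square_centre s)")
    case False
    have "f \<notin> A" if "f \<in> square_edges s" for f
    proof
      assume "f \<in> A"
      then obtain s' where "f \<in> F" "f \<in> square_edges s'" "R (square_centre s0) (square_centre s')"
        unfolding A_def by blast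
      then show False
        using False link[of f s' s] that R_trans by blast
    qed
    then show ?thesis using False by auto
  qed (auto simp: A_def simp del: split_paired_Ex)
  then have "even (card (A \<inter> square_edges s))" for s
    using even_card_edge_boundary_square[of V s] unfolding F_def by simp
  moreover have "e0 \<in> A"
    using assms(3) unfolding A_def R_def F_def by blast
  ultimately have "A = F"
    using even_squares_subset_edge_boundary_eq[OF assms(1,2), of A] unfolding F_def A_def by blast
  then obtain s' where "f \<in> square_edges s'" "R (square_centre s0) (square_centre s')"
    using assms(4) unfolding A_def F_def by blast
  then show ?thesis
    using link[of f s' s] assms(4) R_trans unfolding F_def R_def by blast
qed

lemma graph_connected_dual_edge_boundary:
  assumes "lattice_connected V" "lattice_connected (- V)" "edge_boundary V \<noteq> {}"
  shows "graph_connected (\<Union>(dual_edge ` edge_boundary V)) (dual_edge ` edge_boundary V)"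
proof (rule graph_connected_if_rtranclp)
  define R where "R = (\<lambda>x y. {x, y} \<in> dual_edge ` edge_boundary V)\<^sup>*\<^sup>*"
  obtain e0 s0 where e0: "e0 \<in> edge_boundary V \<inter> square_edges s0"
    using assms(3) edge_boundary_subset_E2 E2_square_edgesE by blast
  have reach: "R (square_centre s0) w" if w: "w \<in> \<Union>(dual_edge ` edge_boundary V)" for w
  proof -
    obtain s f where "w = square_centre s" "f \<in> edge_boundary V \<inter> square_edges s"
      using w by (rule dual_edge_boundary_vertexE)
    then show ?thesis
      using dual_edge_boundary_reachable[OF assms(1,2) e0] unfolding R_def by blast
  qed
  have "symp R"
    unfolding R_def by (intro symp_rtranclp) (auto simp: symp_def insert_commute)
  then show "R x y" if "x \<in> \<Union>(dual_edge ` edge_boundary V)" "y \<in> \<Union>(dual_edge ` edge_boundary V)"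
    for x y
    using reach[OF that(1)] reach[OF that(2)] unfolding R_def by (meson rtranclp_trans sympD)
qed

theorem propositionA1:
  fixes V1 :: "(int \<times> int) set"
  assumes "infinite V1" and "lattice_connected V1"
    and "infinite (- V1)" and "lattice_connected (- V1)"
  defines "F \<equiv> edge_boundary V1"
  defines "Fs \<equiv> dual_edge ` F"
  defines "Ws \<equiv> \<Union> Fs"
  shows "graph_connected Ws Fs \<and> infinite Ws \<and> (\<forall>v\<in>Ws. graph_degree Fs v = 2)"
proof (intro conjI ballI)
  have "infinite F"
    unfolding F_def using assms(1,3) by (rule infinite_edge_boundary)
  then show "graph_connected Ws Fs"
    unfolding Ws_def Fs_def F_def using assms(2,4) by (intro graph_connected_dual_edge_boundary) auto
  have "infinite Fs"
    using \<open>infinite F\<close> inj_on_subset[OF inj_on_dual_edge edge_boundary_subset_E2]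
    unfolding Fs_def F_def by (simp add: finite_image_iff)
  moreover have "Fs \<subseteq> Pow Ws"
    unfolding Ws_def by blast
  ultimately show "infinite Ws"
    using finite_subset by blast
  show "graph_degree Fs v = 2" if "v \<in> Ws" for v
    using that graph_degree_dual_edge_boundary[OF assms(2,4)] unfolding Ws_def Fs_def F_def by blast
qed

end
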